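(* Let $y_1,\dots,y_n\in\mathbb{C}^m$, not all zero, and let $$\mathcal{F}=\Big\{X\in\mathbb{C}^{m\times m}:\ X \text{ Hermitian Toeplitz},\ X\succ 0,\ \tfrac1n\textstyle\sum_{i=1}^n y_i^HX^{-1}y_i\le 1\Big\},\qquad \tilde f(X)=\log\det X .$$ Starting from $X_0\in\mathcal{F}$, let $\{X_t\}$ be generated by one of the two following rules, used at every iteration (assuming the minimizers exist): (ATOM1) $X_{t+1}\in\arg\min_{X\in\mathcal{F}}\ \mathrm{Tr}(X_t^{-1}X)$; (ATOM2) $X_{t+1}\in\arg\min_{X\in\mathcal{F}}\ \|X-B_t\|_F^2$ with $B_t=X_t-\tfrac12 X_t^{-1}$. Then (i) $\tilde f(X_{t+1})\le \tilde f(X_t)$ for all $t$, i.e. the objective of problem $\min_{X\in\mathcal F}\tilde f(X)$ decreases monotonically along the iterations; and (ii) every positive definite cluster point $Z$ of $\{X_t\}$ is a stationary point of $\min_{X\in\mathcal{F}}\tilde f(X)$, i.e. $\tilde f'(Z;D)\ge 0$ for every direction $D$ such that $Z+D\in\mathcal{F}$.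
   Context: $\|\cdot\|_F$ is the Frobenius norm. The directional derivative is $\tilde f'(X;D)=\liminf_{\lambda\downarrow 0}\frac{\tilde f(X+\lambda D)-\tilde f(X)}{\lambda}$ (for $\tilde f=\log\det$ this equals $\mathrm{Tr}(X^{-1}D)$). The set $\mathcal{F}$ is convex. *)

theory Defs
  imports "HOL-Library.Extended_Real" "HOL-Library.Liminf_Limsup" "Jordan_Normal_Form.Matrix" "Jordan_Normal_Form.Determinant"
begin

definition herm :: "nat \<Rightarrow> complex mat \<Rightarrow> bool" where
  "herm m X \<longleftrightarrow> X \<in> carrier_mat m m \<and> (\<forall>i<m. \<forall>j<m. X $$ (i,j) = cnj (X $$ (j,i)))"

definition toeplitz :: "nat \<Rightarrow> complex mat \<Rightarrow> bool" where
  "toeplitz m X \<longleftrightarrow> X \<in> carrier_mat m m \<and>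
     (\<forall>i j. i + 1 < m \<longrightarrow> j + 1 < m \<longrightarrow> X $$ (i+1, j+1) = X $$ (i,j))"

definition qform :: "nat \<Rightarrow> complex mat \<Rightarrow> complex vec \<Rightarrow> complex" where
  "qform m X v = (\<Sum>i<m. \<Sum>j<m. cnj (v $ i) * X $$ (i,j) * v $ j)"

definition posdef :: "nat \<Rightarrow> complex mat \<Rightarrow> bool" where
  "posdef m X \<longleftrightarrow> herm m X \<and>
     (\<forall>v \<in> carrier_vec m. v \<noteq> 0\<^sub>v m \<longrightarrow> qform m X v \<in> \<real> \<and> Re (qform m X v) > 0)"

definition minv :: "nat \<Rightarrow> complex mat \<Rightarrow> complex mat" where
  "minv m X = (SOME B. B \<in> carrier_mat m m \<and> inverts_mat X B \<and> inverts_mat B X)"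

definition feasible :: "nat \<Rightarrow> nat \<Rightarrow> (nat \<Rightarrow> complex vec) \<Rightarrow> complex mat set" where
  "feasible m n y = {X. herm m X \<and> toeplitz m X \<and> posdef m X \<and>
      Re ((1 / of_nat n) * (\<Sum>i<n. qform m (minv m X) (y i))) \<le> 1}"

definition logdet :: "complex mat \<Rightarrow> real" where
  "logdet X = ln (Re (det X))"

definition frob2 :: "nat \<Rightarrow> complex mat \<Rightarrow> real" where
  "frob2 m A = (\<Sum>i<m. \<Sum>j<m. (cmod (A $$ (i,j)))^2)"

definition dir_deriv :: "(complex mat \<Rightarrow> real) \<Rightarrow> complex mat \<Rightarrow> complex mat \<Rightarrow> ereal" where
  "dir_deriv f X D = Liminf (at_right 0)
       (\<lambda>l::real. ereal ((f (X + complex_of_real l \<cdot>\<^sub>m D) - f X) / l))"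

definition mtrace :: "nat \<Rightarrow> complex mat \<Rightarrow> complex" where
  "mtrace m A = (\<Sum>i<m. A $$ (i,i))"

definition atom1_step :: "nat \<Rightarrow> nat \<Rightarrow> (nat \<Rightarrow> complex vec) \<Rightarrow> complex mat \<Rightarrow> complex mat \<Rightarrow> bool" where
  "atom1_step m n y Xt Xn \<longleftrightarrow> Xn \<in> feasible m n y \<and>
     (\<forall>Y \<in> feasible m n y. Re (mtrace m (minv m Xt * Xn)) \<le> Re (mtrace m (minv m Xt * Y)))"

definition atom2_step :: "nat \<Rightarrow> nat \<Rightarrow> (nat \<Rightarrow> complex vec) \<Rightarrow> complex mat \<Rightarrow> complex mat \<Rightarrow> bool" where
  "atom2_step m n y Xt Xn \<longleftrightarrow> Xn \<in> feasible m n y \<and>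
     (let B = Xt - (1/2 :: complex) \<cdot>\<^sub>m minv m Xt in
      \<forall>Y \<in> feasible m n y. frob2 m (Xn - B) \<le> frob2 m (Y - B))"

end

theory Submission
  imports Defs "Jordan_Normal_Form.Schur_Decomposition"
begin

text \<open>
  Both rules are majorisation-minimisation steps for the concave function log det, driven by
  the inequality log det Y - log det X \<le> Re Tr(inv(X) Y) - m for positive definite X and Y
  (ln \<lambda> \<le> \<lambda> - 1 applied to the eigenvalues of inv(X) Y). An ATOM1 step minimises the right-hand
  side over the feasible set, which contains X itself; expanding the square in an ATOM2 step
  shows that there the right-hand side is even at most -||X_(t+1) - X_t||_F^2. Hence log det
  decreases.

  Along a subsequence converging to a positive definite Z the decreases tend to zero, so the
  optimality conditions of the steps pass to the limit and give Re Tr(inv(Z) D) \<ge> 0 for every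
  feasible direction D: for ATOM1 directly, for ATOM2 through the variational inequality of
  the projection, since then also X_(t+1) - X_t \<rightarrow> 0. The segments used there stay feasible
  because y^H inv(X) y is a supremum of affine functions of X. Finally Re Tr(inv(Z) D) bounds
  the directional derivative from below, by the same inequality between Z + \<lambda>D and Z.
\<close>

lemma index_mult_mat_sum:
  assumes "A \<in> carrier_mat m m" "B \<in> carrier_mat m m" "i < m" "j < m"
  shows "(A * B) $$ (i,j) = (\<Sum>k<m. A $$ (i,k) * B $$ (k,j))"
  using assms by (simp add: scalar_prod_def lessThan_atLeast0)

lemma index_mult_mat_vec_sum:
  assumes "A \<in> carrier_mat m m" "v \<in> carrier_vec m" "i < m"
  shows "(A *\<^sub>v v) $ i = (\<Sum>j<m. A $$ (i,j) * v $ j)"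
  using assms by (simp add: scalar_prod_def lessThan_atLeast0)

lemma mtrace_mult:
  assumes "A \<in> carrier_mat m m" "B \<in> carrier_mat m m"
  shows "mtrace m (A * B) = (\<Sum>i<m. \<Sum>j<m. A $$ (i,j) * B $$ (j,i))"
  unfolding mtrace_def by (intro sum.cong refl, rule index_mult_mat_sum[OF assms]) auto

lemma mtrace_mult_comm:
  assumes "A \<in> carrier_mat m m" "B \<in> carrier_mat m m"
  shows "mtrace m (A * B) = mtrace m (B * A)"
  unfolding mtrace_mult[OF assms] mtrace_mult[OF assms(2,1)]
  by (subst sum.swap) (simp add: mult.commute)

lemma mtrace_one: "mtrace m (1\<^sub>m m) = of_nat m"
  unfolding mtrace_def by simp

lemma mtrace_mult_add_right:
  assumes "A \<in> carrier_mat m m" "B \<in> carrier_mat m m" "C \<in> carrier_mat m m"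
  shows "mtrace m (A * (B + C)) = mtrace m (A * B) + mtrace m (A * C)"
proof -
  have "mtrace m (A * (B + C)) = (\<Sum>i<m. \<Sum>j<m. A $$ (i,j) * B $$ (j,i) + A $$ (i,j) * C $$ (j,i))"
    unfolding mtrace_mult[OF assms(1) add_carrier_mat[OF assms(3)]]
    using assms by (intro sum.cong refl) (simp add: distrib_left)
  then show ?thesis
    unfolding mtrace_mult[OF assms(1,2)] mtrace_mult[OF assms(1,3)] by (simp add: sum.distrib)
qed

lemma mtrace_mult_diff_right:
  assumes "A \<in> carrier_mat m m" "B \<in> carrier_mat m m" "C \<in> carrier_mat m m"
  shows "mtrace m (A * (B - C)) = mtrace m (A * B) - mtrace m (A * C)"
proof -
  have "mtrace m (A * (B - C)) = (\<Sum>i<m. \<Sum>j<m. A $$ (i,j) * B $$ (j,i) - A $$ (i,j) * C $$ (j,i))"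
    unfolding mtrace_mult[OF assms(1) minus_carrier_mat[OF assms(3)]]
    using assms by (intro sum.cong refl) (simp add: right_diff_distrib)
  then show ?thesis
    unfolding mtrace_mult[OF assms(1,2)] mtrace_mult[OF assms(1,3)] by (simp add: sum_subtractf)
qed

lemma mtrace_mult_smult_right:
  assumes "A \<in> carrier_mat m m" "C \<in> carrier_mat m m"
  shows "mtrace m (A * (c \<cdot>\<^sub>m C)) = c * mtrace m (A * C)"
  unfolding mtrace_mult[OF assms(1) smult_carrier_mat[OF assms(2)]] mtrace_mult[OF assms]
  using assms by (simp add: sum_distrib_left algebra_simps)

lemma qform_eq_sum_mult_vec:
  assumes "A \<in> carrier_mat m m" "v \<in> carrier_vec m"
  shows "qform m A v = (\<Sum>i<m. cnj (v $ i) * (A *\<^sub>v v) $ i)"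
  unfolding qform_def
  by (intro sum.cong refl, subst index_mult_mat_vec_sum[OF assms])
     (auto simp: sum_distrib_left mult.assoc)

lemma qform_eigen:
  assumes "A \<in> carrier_mat m m" "M \<in> carrier_mat m m" "v \<in> carrier_vec m"
    and "A *\<^sub>v v = e \<cdot>\<^sub>v (M *\<^sub>v v)"
  shows "qform m A v = e * qform m M v"
proof -
  have "qform m A v = (\<Sum>i<m. cnj (v $ i) * (A *\<^sub>v v) $ i)"
    using qform_eq_sum_mult_vec assms by blast
  also have "\<dots> = (\<Sum>i<m. e * (cnj (v $ i) * (M *\<^sub>v v) $ i))"
    using assms(1,2,4) by (auto intro!: sum.cong)
  also have "\<dots> = e * qform m M v"
    using qform_eq_sum_mult_vec[OF assms(2,3)] by (simp add: sum_distrib_left)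
  finally show ?thesis .
qed

lemma qform_one_pos:
  assumes "v \<in> carrier_vec m" "v \<noteq> 0\<^sub>v m"
  shows "qform m (1\<^sub>m m) v \<in> \<real> \<and> Re (qform m (1\<^sub>m m) v) > 0"
proof -
  have e: "qform m (1\<^sub>m m) v = (\<Sum>i<m. cnj (v $ i) * v $ i)"
    using assms(1) by (subst qform_eq_sum_mult_vec[of _ m]) auto
  have re: "Re (qform m (1\<^sub>m m) v) = (\<Sum>i<m. (cmod (v $ i))^2)"
    unfolding e Re_sum by (intro sum.cong refl) (simp add: cmod_power2, simp add: power2_eq_square)
  have im: "Im (qform m (1\<^sub>m m) v) = 0"
    unfolding e Im_sum by (intro sum.neutral) (simp add: algebra_simps)
  obtain i where i: "i < m" "v $ i \<noteq> 0" using assms by (metis eq_vecI carrier_vecD index_zero_vec)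
  have "(\<Sum>i<m. (cmod (v $ i))^2) > 0"
    by (rule sum_pos2[of _ i]) (use i in auto)
  then show ?thesis using re im complex_is_Real_iff by auto
qed

lemma posdef_carrier: "posdef m A \<Longrightarrow> A \<in> carrier_mat m m"
  unfolding posdef_def herm_def by auto

lemma posdef_det_nonzero:
  assumes "posdef m A" shows "det A \<noteq> 0"
proof
  assume "det A = 0"
  have A: "A \<in> carrier_mat m m" using assms posdef_carrier by auto
  then obtain v where v: "v \<in> carrier_vec m" "v \<noteq> 0\<^sub>v m" "A *\<^sub>v v = 0\<^sub>v m"
    using \<open>det A = 0\<close> det_0_iff_vec_prod_zero by blast
  have "qform m A v = 0" using qform_eq_sum_mult_vec[OF A v(1)] v by auto
  with assms v show False unfolding posdef_def by auto
qed

lemma minv_adj_mat: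
  assumes A: "A \<in> carrier_mat m m" and d: "det A \<noteq> 0"
  shows "minv m A = (1 / det A) \<cdot>\<^sub>m adj_mat A"
    "minv m A \<in> carrier_mat m m" "A * minv m A = 1\<^sub>m m" "minv m A * A = 1\<^sub>m m"
proof -
  define B where "B = (1 / det A) \<cdot>\<^sub>m adj_mat A"
  have B: "B \<in> carrier_mat m m" using adj_mat[OF A] B_def by auto
  have AB: "A * B = 1\<^sub>m m" unfolding B_def using adj_mat[OF A] A d
    by (simp add: mult_smult_distrib[of _ m m _ m]) (intro eq_matI, auto)
  have BA: "B * A = 1\<^sub>m m" unfolding B_def using adj_mat[OF A] A d
    by (simp add: mult_smult_assoc_mat[of _ m m _ m]) (intro eq_matI, auto)
  have "B \<in> carrier_mat m m \<and> inverts_mat A B \<and> inverts_mat B A"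
    using A B AB BA by (auto simp: inverts_mat_def)
  then have C: "minv m A \<in> carrier_mat m m \<and> inverts_mat A (minv m A) \<and> inverts_mat (minv m A) A"
    unfolding minv_def by (rule someI)
  have "minv m A = minv m A * (A * B)" using C AB by auto
  also have "\<dots> = (minv m A * A) * B" using C A B by (simp add: assoc_mult_mat[of _ m m _ m _ m])
  also have "\<dots> = B" using C B A by (auto simp: inverts_mat_def)
  finally have "minv m A = B" .
  then show "minv m A = (1 / det A) \<cdot>\<^sub>m adj_mat A"
    "minv m A \<in> carrier_mat m m" "A * minv m A = 1\<^sub>m m" "minv m A * A = 1\<^sub>m m"
    using B_def B AB BA by auto
qed

lemma posdef_minv:
  assumes "posdef m A"
  shows "minv m A \<in> carrier_mat m m" "A * minv m A = 1\<^sub>m m" "minv m A * A = 1\<^sub>m m"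
  using minv_adj_mat[OF posdef_carrier[OF assms] posdef_det_nonzero[OF assms]] by auto

lemma mtrace_minv_mult_self:
  assumes "posdef m A" shows "mtrace m (minv m A * A) = of_nat m"
  using posdef_minv(3)[OF assms] by (simp add: mtrace_one)

section \<open>The determinant-trace inequality\<close>

lemma ln_prod_list_le_sum_list:
  assumes "\<forall>e\<in>set es. e \<in> \<real> \<and> Re e > 0"
  shows "prod_list es \<in> \<real> \<and> Re (prod_list es) > 0 \<and>
         ln (Re (prod_list es)) \<le> Re (sum_list es) - real (length es)"
  using assms
proof (induction es)
  case Nil
  then show ?case by simp
next
  case (Cons e es)
  then have IH: "prod_list es \<in> \<real>" "Re (prod_list es) > 0"
     "ln (Re (prod_list es)) \<le> Re (sum_list es) - real (length es)"
    and e: "e \<in> \<real>" "Re e > 0" by auto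
  have re: "Re (e * prod_list es) = Re e * Re (prod_list es)"
    using e(1) IH(1) by (auto elim!: Reals_cases)
  have "ln (Re e * Re (prod_list es)) = ln (Re e) + ln (Re (prod_list es))"
    using e IH by (simp add: ln_mult)
  also have "\<dots> \<le> (Re e - 1) + (Re (sum_list es) - real (length es))"
    using ln_le_minus_one[OF e(2)] IH(3) by linarith
  finally show ?case using e IH re by (auto intro: Reals_mult)
qed

text \<open>Triangularise by Schur: the determinant and the trace become the product and the sum
  of the eigenvalues, and ln x \<le> x - 1 is applied eigenvalue by eigenvalue.\<close>

lemma ln_det_le_mtrace_minus_dim:
  fixes C :: "complex mat"
  assumes C: "C \<in> carrier_mat m m" and pos: "\<And>e. eigenvalue C e \<Longrightarrow> e \<in> \<real> \<and> Re e > 0"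
  shows "det C \<in> \<real> \<and> Re (det C) > 0 \<and> ln (Re (det C)) \<le> Re (mtrace m C) - real m"
proof -
  obtain es where cp: "char_poly C = (\<Prod>a\<leftarrow>es. [:-a,1:])" "length es = m"
    using char_poly_factorized[OF C] by blast
  obtain B P Q where sd: "schur_decomposition C es = (B,P,Q)"
    by (cases "schur_decomposition C es") auto
  from schur_decomposition[OF C cp(1) sd] have sim: "similar_mat_wit C B P Q"
    and ut: "upper_triangular B" and dg: "diag_mat B = es" by auto
  note S = similar_mat_witD2[OF C sim]
  have dPQ: "det P * det Q = 1" using det_mult[OF S(6) S(7)] S(1) by simp
  have "det C = det P * det B * det Q"
    using S det_mult[OF mult_carrier_mat[OF S(6) S(5)] S(7)] det_mult[OF S(6) S(5)] by simp
  also have "\<dots> = det B" using dPQ by (simp add: algebra_simps)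
  also have "\<dots> = prod_list es" using det_upper_triangular[OF ut S(5)] dg by simp
  finally have dC: "det C = prod_list es" .
  have "mtrace m C = mtrace m (Q * (P * B))"
    unfolding S(3) by (rule mtrace_mult_comm[OF mult_carrier_mat[OF S(6) S(5)] S(7)])
  also have "\<dots> = mtrace m B"
    unfolding assoc_mult_mat[OF S(7) S(6) S(5), symmetric] S(2) using S(5) by simp
  also have "\<dots> = sum_list es"
    unfolding mtrace_def dg[symmetric] diag_mat_def using S(5)
    by (simp add: sum_set_upt_conv_sum_list_nat[symmetric] lessThan_atLeast0)
  finally have tC: "mtrace m C = sum_list es" .
  have "\<forall>e\<in>set es. e \<in> \<real> \<and> Re e > 0"
  proof
    fix e assume "e \<in> set es"
    then have "poly (char_poly C) e = 0"
      unfolding cp(1) by (auto simp: poly_prod_list prod_list_zero_iff)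
    then show "e \<in> \<real> \<and> Re e > 0" using pos eigenvalue_root_char_poly[OF C] by blast
  qed
  from ln_prod_list_le_sum_list[OF this] show ?thesis unfolding dC tC cp(2) .
qed

lemma Reals_pos_factor:
  fixes a b e :: complex
  assumes "a = e * b" "a \<in> \<real>" "Re a > 0" "b \<in> \<real>" "Re b > 0"
  shows "e \<in> \<real> \<and> Re e > 0"
proof -
  obtain ra rb where ab: "a = of_real ra" "b = of_real rb" using assms by (auto elim!: Reals_cases)
  have rb: "rb > 0" and ra: "ra > 0" using assms(3,5) ab by simp_all
  have "e = of_real (ra / rb)" using assms(1) ab rb by (simp add: field_simps)
  then show ?thesis using rb ra by simp
qed

text \<open>If inv(A) B v = e v then B v = e (A v), so e is the ratio of two positive quadratic forms
  at v.\<close>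

lemma posdef_minv_mult_eigenvalue_pos:
  assumes A: "posdef m A" and B: "posdef m B" and ev: "eigenvalue (minv m A * B) e"
  shows "e \<in> \<real> \<and> Re e > 0"
proof -
  have Ac: "A \<in> carrier_mat m m" and Bc: "B \<in> carrier_mat m m"
    using A B posdef_carrier by auto
  note I = posdef_minv[OF A]
  define C where "C = minv m A * B"
  have Cc: "C \<in> carrier_mat m m" unfolding C_def using I(1) Bc by auto
  obtain v where v: "v \<in> carrier_vec m" "v \<noteq> 0\<^sub>v m" "C *\<^sub>v v = e \<cdot>\<^sub>v v"
    using ev Cc unfolding C_def[symmetric] eigenvalue_def eigenvector_def by auto
  have "A * C = B" unfolding C_def
    using assoc_mult_mat[OF Ac I(1) Bc, symmetric] I(2) Bc by simp
  then have "B *\<^sub>v v = (A * C) *\<^sub>v v" by simp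
  also have "\<dots> = A *\<^sub>v (C *\<^sub>v v)" using Ac Cc v by (simp add: assoc_mult_mat_vec)
  also have "\<dots> = e \<cdot>\<^sub>v (A *\<^sub>v v)" using v Ac by (simp add: mult_mat_vec)
  finally have "qform m B v = e * qform m A v" using qform_eigen[OF Bc Ac v(1)] by blast
  from Reals_pos_factor[OF this] A B v show ?thesis unfolding posdef_def by auto
qed

lemma posdef_det_pos:
  assumes A: "posdef m A"
  shows "det A \<in> \<real> \<and> Re (det A) > 0"
proof -
  have "minv m (1\<^sub>m m) = 1\<^sub>m m"
    using minv_adj_mat(2,3)[of "1\<^sub>m m" m] by simp
  then have "minv m (1\<^sub>m m) * A = A" using posdef_carrier[OF A] by simp
  moreover have "posdef m (1\<^sub>m m)"
    unfolding posdef_def herm_def using qform_one_pos by auto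
  ultimately show ?thesis
    using ln_det_le_mtrace_minus_dim[OF posdef_carrier[OF A]]
      posdef_minv_mult_eigenvalue_pos[of m "1\<^sub>m m" A] A by auto
qed

lemma logdet_le_mtrace_minv_mult:
  assumes A: "posdef m A" and B: "posdef m B"
  shows "logdet B - logdet A \<le> Re (mtrace m (minv m A * B)) - real m"
proof -
  have Ac: "A \<in> carrier_mat m m" and Bc: "B \<in> carrier_mat m m"
    using A B posdef_carrier by auto
  note I = posdef_minv[OF A]
  define C where "C = minv m A * B"
  have Cc: "C \<in> carrier_mat m m" unfolding C_def using I(1) Bc by auto
  have dC: "ln (Re (det C)) \<le> Re (mtrace m C) - real m"
    using ln_det_le_mtrace_minus_dim[OF Cc] posdef_minv_mult_eigenvalue_pos[OF A B]
    unfolding C_def by blast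
  have "det (minv m A) * det A = 1" using det_mult[OF I(1) Ac] I(3) by simp
  then have "det C = det B / det A" unfolding C_def using det_mult[OF I(1) Bc] posdef_det_nonzero[OF A]
    by (simp add: field_simps)
  moreover obtain a b where ab: "det A = of_real a" "det B = of_real b" "a > 0" "b > 0"
    using posdef_det_pos[OF A] posdef_det_pos[OF B] by (auto elim!: Reals_cases)
  ultimately have "ln (Re (det C)) = ln b - ln a" using ab by (simp add: ln_div)
  then show ?thesis using dC ab unfolding C_def logdet_def by simp
qed

section \<open>Convexity of the feasible set\<close>

lemma qform_add_smult:
  assumes "A \<in> carrier_mat m m" "D \<in> carrier_mat m m"
  shows "qform m (A + c \<cdot>\<^sub>m D) v = qform m A v + c * qform m D v"
proof -
  have "qform m (A + c \<cdot>\<^sub>m D) v = (\<Sum>i<m. \<Sum>j<m. cnj (v $ i) * A $$ (i,j) * v $ j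
        + c * (cnj (v $ i) * D $$ (i,j) * v $ j))"
    unfolding qform_def using assms by (intro sum.cong refl) (simp add: algebra_simps)
  then show ?thesis unfolding qform_def by (simp add: sum.distrib sum_distrib_left)
qed

lemma qform_add:
  assumes "A \<in> carrier_mat m m" "D \<in> carrier_mat m m"
  shows "qform m (A + D) v = qform m A v + qform m D v"
proof -
  have "qform m (A + D) v = (\<Sum>i<m. \<Sum>j<m. cnj (v $ i) * A $$ (i,j) * v $ j
        + cnj (v $ i) * D $$ (i,j) * v $ j)"
    unfolding qform_def using assms by (intro sum.cong refl) (simp add: algebra_simps)
  then show ?thesis unfolding qform_def by (simp add: sum.distrib)
qed

lemma herm_entry: "herm m A \<Longrightarrow> i < m \<Longrightarrow> j < m \<Longrightarrow> A $$ (i,j) = cnj (A $$ (j,i))"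
  unfolding herm_def by blast

lemma herm_carrier: "herm m A \<Longrightarrow> A \<in> carrier_mat m m"
  unfolding herm_def by blast

lemma herm_diff:
  assumes A: "herm m A" and B: "herm m B"
  shows "herm m (A - B)"
  unfolding herm_def
proof (intro conjI allI impI)
  have Ac: "A \<in> carrier_mat m m" and Bc: "B \<in> carrier_mat m m"
    using A B by (auto intro: herm_carrier)
  then show "A - B \<in> carrier_mat m m" by (intro minus_carrier_mat)
  fix i j assume ij: "i < m" "j < m"
  then show "(A - B) $$ (i,j) = cnj ((A - B) $$ (j,i))"
    using Ac Bc herm_entry[OF A ij] herm_entry[OF B ij] by simp
qed

lemma herm_of_herm_add:
  assumes A: "herm m A" and AD: "herm m (A + D)" and D: "D \<in> carrier_mat m m"
  shows "herm m D"
  unfolding herm_def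
proof (intro conjI allI impI D)
  have Ac: "A \<in> carrier_mat m m" using A by (rule herm_carrier)
  fix i j assume ij: "i < m" "j < m"
  have "A $$ (i,j) + D $$ (i,j) = cnj (A $$ (j,i) + D $$ (j,i))"
    using herm_entry[OF AD ij] ij Ac D by simp
  then show "D $$ (i,j) = cnj (D $$ (j,i))" using herm_entry[OF A ij] by simp
qed

lemma herm_add_smult_of_real:
  assumes A: "herm m A" and D: "herm m D"
  shows "herm m (A + complex_of_real l \<cdot>\<^sub>m D)"
  unfolding herm_def
proof (intro conjI allI impI)
  have Ac: "A \<in> carrier_mat m m" and Dc: "D \<in> carrier_mat m m"
    using A D by (auto intro: herm_carrier)
  then show "A + complex_of_real l \<cdot>\<^sub>m D \<in> carrier_mat m m" by simp
  fix i j assume ij: "i < m" "j < m"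
  then show "(A + complex_of_real l \<cdot>\<^sub>m D) $$ (i,j) = cnj ((A + complex_of_real l \<cdot>\<^sub>m D) $$ (j,i))"
    using Ac Dc herm_entry[OF A ij] herm_entry[OF D ij] by simp
qed

lemma toeplitz_segment:
  assumes A: "toeplitz m A" and AD: "toeplitz m (A + D)" and D: "D \<in> carrier_mat m m"
  shows "toeplitz m (A + complex_of_real l \<cdot>\<^sub>m D)"
  unfolding toeplitz_def
proof (intro conjI allI impI)
  show "A + complex_of_real l \<cdot>\<^sub>m D \<in> carrier_mat m m" using A D unfolding toeplitz_def by auto
  fix i j assume ij: "i + 1 < m" "j + 1 < m"
  have Ac: "A \<in> carrier_mat m m" using A unfolding toeplitz_def by auto
  have t1: "A $$ (i+1,j+1) = A $$ (i,j)" using A ij unfolding toeplitz_def by blast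
  have "(A + D) $$ (i+1,j+1) = (A + D) $$ (i,j)" using AD ij unfolding toeplitz_def by blast
  then have "A $$ (i+1,j+1) + D $$ (i+1,j+1) = A $$ (i,j) + D $$ (i,j)" using ij Ac D
    by (simp del: One_nat_def add_Suc_right)
  then show "(A + complex_of_real l \<cdot>\<^sub>m D) $$ (i + 1, j + 1) = (A + complex_of_real l \<cdot>\<^sub>m D) $$ (i, j)"
    using ij Ac D t1 by (simp del: One_nat_def add_Suc_right)
qed

lemma posdef_segment:
  assumes A: "posdef m A" and AD: "posdef m (A + D)" and D: "D \<in> carrier_mat m m"
    and l: "0 \<le> l" "l \<le> 1"
  shows "posdef m (A + complex_of_real l \<cdot>\<^sub>m D)"
  unfolding posdef_def
proof (intro conjI ballI impI)
  show "herm m (A + complex_of_real l \<cdot>\<^sub>m D)"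
    using A AD D herm_add_smult_of_real herm_of_herm_add unfolding posdef_def by blast
  fix v :: "complex vec" assume v: "v \<in> carrier_vec m" "v \<noteq> 0\<^sub>v m"
  have Ac: "A \<in> carrier_mat m m" using A posdef_carrier by auto
  have qa: "qform m A v \<in> \<real>" "Re (qform m A v) > 0" and qb: "qform m (A + D) v \<in> \<real>" "Re (qform m (A + D) v) > 0"
    using A AD v unfolding posdef_def by blast+
  define a where "a = Re (qform m A v)"
  define b where "b = Re (qform m (A + D) v)"
  have ab: "qform m A v = of_real a" "qform m (A + D) v = of_real b" "a > 0" "b > 0"
    using qa qb unfolding a_def b_def by (auto simp: of_real_Re)
  have "qform m D v = qform m (A + D) v - qform m A v" using qform_add[OF Ac D, of v] by simp
  then have "qform m D v = of_real (b - a)" using ab by simp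
  then have "qform m (A + complex_of_real l \<cdot>\<^sub>m D) v = of_real (a + l * (b - a))"
    using qform_add_smult[OF Ac D, of "complex_of_real l" v] ab by simp
  moreover have "a + l * (b - a) > 0"
  proof (cases "l = 0")
    case True then show ?thesis using ab by simp
  next
    case False then have "l * b > 0" using l ab by simp
    moreover have "(1 - l) * a \<ge> 0" using l ab by simp
    ultimately show ?thesis by (simp add: algebra_simps)
  qed
  ultimately show "qform m (A + complex_of_real l \<cdot>\<^sub>m D) v \<in> \<real>"
    "0 < Re (qform m (A + complex_of_real l \<cdot>\<^sub>m D) v)" by auto
qed

definition sesq :: "nat \<Rightarrow> complex mat \<Rightarrow> complex vec \<Rightarrow> complex vec \<Rightarrow> complex" where
  "sesq m X a b = (\<Sum>i<m. \<Sum>j<m. cnj (a $ i) * X $$ (i,j) * b $ j)"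

lemma sesq_eq_sum_mult_vec:
  assumes "X \<in> carrier_mat m m" "b \<in> carrier_vec m"
  shows "sesq m X a b = (\<Sum>i<m. cnj (a $ i) * (X *\<^sub>v b) $ i)"
  unfolding sesq_def
  by (intro sum.cong refl, subst index_mult_mat_vec_sum[OF assms]) (auto simp: sum_distrib_left mult.assoc)

lemma sesq_herm_swap:
  assumes "herm m X"
  shows "sesq m X a b = cnj (sesq m X b a)"
proof -
  have "cnj (sesq m X b a) = (\<Sum>i<m. \<Sum>j<m. b $ i * cnj (X $$ (i,j)) * cnj (a $ j))"
    unfolding sesq_def by (simp add: cnj_sum)
  also have "\<dots> = (\<Sum>i<m. \<Sum>j<m. b $ i * X $$ (j,i) * cnj (a $ j))"
  proof (intro sum.cong refl)
    fix i j assume "i \<in> {..<m}" "j \<in> {..<m}"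
    then have "X $$ (j,i) = cnj (X $$ (i,j))" using assms unfolding herm_def by blast
    then show "b $ i * cnj (X $$ (i, j)) * cnj (a $ j) = b $ i * X $$ (j, i) * cnj (a $ j)" by simp
  qed
  also have "\<dots> = sesq m X a b" unfolding sesq_def by (subst sum.swap) (simp add: ac_simps)
  finally show ?thesis by simp
qed

lemma qform_eq_sesq: "qform m X v = sesq m X v v" unfolding qform_def sesq_def ..

lemma qform_diff_sesq:
  assumes "z \<in> carrier_vec m" "u \<in> carrier_vec m"
  shows "qform m X (z - u) = sesq m X z z - sesq m X z u - sesq m X u z + sesq m X u u"
proof -
  have "qform m X (z - u) = (\<Sum>i<m. \<Sum>j<m. cnj (z $ i) * X $$ (i,j) * z $ j
       - cnj (z $ i) * X $$ (i,j) * u $ j - cnj (u $ i) * X $$ (i,j) * z $ j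
       + cnj (u $ i) * X $$ (i,j) * u $ j)"
    unfolding qform_def using assms by (intro sum.cong refl) (simp add: algebra_simps)
  then show ?thesis unfolding sesq_def by (simp add: sum.distrib sum_subtractf)
qed

lemma posdef_qform_nonneg:
  assumes X: "posdef m X" and w: "w \<in> carrier_vec m"
  shows "Re (qform m X w) \<ge> 0"
proof (cases "w = 0\<^sub>v m")
  case True
  then show ?thesis unfolding qform_def by simp
next
  case False
  then show ?thesis using X w unfolding posdef_def by fastforce
qed

text \<open>The inverse quadratic form is a supremum of functions affine in X, attained at
  z = inv(X) y; this is what makes the constraint of the feasible set convex.\<close>

lemma qform_minv_variational:
  assumes X: "posdef m X" and y: "y \<in> carrier_vec m" and z: "z \<in> carrier_vec m"
  shows "2 * Re (\<Sum>i<m. cnj (z $ i) * y $ i) - Re (qform m X z) \<le> Re (qform m (minv m X) y)"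
    and "2 * Re (\<Sum>i<m. cnj ((minv m X *\<^sub>v y) $ i) * y $ i) - Re (qform m X (minv m X *\<^sub>v y))
          = Re (qform m (minv m X) y)"
proof -
  have Xc: "X \<in> carrier_mat m m" using X posdef_carrier by auto
  have hX: "herm m X" using X unfolding posdef_def by auto
  note I = minv_adj_mat[OF Xc posdef_det_nonzero[OF X]]
  define u where "u = minv m X *\<^sub>v y"
  have u: "u \<in> carrier_vec m" unfolding u_def using I(2) y by auto
  have Xu: "X *\<^sub>v u = y" unfolding u_def
    using assoc_mult_mat_vec[OF Xc I(2) y, symmetric] I(3) y by simp
  have bzu: "sesq m X z u = (\<Sum>i<m. cnj (z $ i) * y $ i)" using sesq_eq_sum_mult_vec[OF Xc u] Xu by simp
  have buu: "sesq m X u u = (\<Sum>i<m. cnj (u $ i) * y $ i)" using sesq_eq_sum_mult_vec[OF Xc u] Xu by simp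
  have "qform m (minv m X) y = (\<Sum>i<m. cnj (y $ i) * u $ i)"
    unfolding u_def by (rule qform_eq_sum_mult_vec[OF I(2) y])
  then have "sesq m X u u = cnj (qform m (minv m X) y)" unfolding buu by (simp add: cnj_sum mult.commute)
  then have "Re (qform m (minv m X) y) = Re (sesq m X u u)" by simp
  note R = this
  have "Re (qform m X (z - u)) \<ge> 0" using posdef_qform_nonneg[OF X] z u by auto
  then have "Re (sesq m X z z) - Re (sesq m X z u) - Re (sesq m X u z) + Re (sesq m X u u) \<ge> 0"
    unfolding qform_diff_sesq[OF z u] by simp
  moreover have "Re (sesq m X u z) = Re (sesq m X z u)" using sesq_herm_swap[OF hX, of u z] by simp
  ultimately show "2 * Re (\<Sum>i<m. cnj (z $ i) * y $ i) - Re (qform m X z) \<le> Re (qform m (minv m X) y)"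
    using R unfolding bzu[symmetric] by (simp add: qform_eq_sesq)
  show "2 * Re (\<Sum>i<m. cnj ((minv m X *\<^sub>v y) $ i) * y $ i) - Re (qform m X (minv m X *\<^sub>v y))
          = Re (qform m (minv m X) y)"
    using R unfolding u_def[symmetric] buu[symmetric] by (simp add: qform_eq_sesq)
qed

lemma Re_inverse_of_nat_mult: "Re ((1 / of_nat n) * (w::complex)) = Re w / real n"
  by (cases "n = 0") (simp_all add: Re_divide power2_eq_square)

lemma qform_minv_segment_convex:
  assumes A: "posdef m A" and AD: "posdef m (A + D)" and D: "D \<in> carrier_mat m m"
    and l: "0 \<le> l" "l \<le> 1" and yv: "yv \<in> carrier_vec m"
  shows "Re (qform m (minv m (A + complex_of_real l \<cdot>\<^sub>m D)) yv)
     \<le> (1 - l) * Re (qform m (minv m A) yv) + l * Re (qform m (minv m (A + D)) yv)"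
proof -
  define W where "W = A + complex_of_real l \<cdot>\<^sub>m D"
  have W: "posdef m W" unfolding W_def by (rule posdef_segment[OF A AD D l])
  have Ac: "A \<in> carrier_mat m m" using A posdef_carrier by auto
  have Wc: "W \<in> carrier_mat m m" using W posdef_carrier by auto
  note I = minv_adj_mat[OF Wc posdef_det_nonzero[OF W]]
  define u where "u = minv m W *\<^sub>v yv"
  have u: "u \<in> carrier_vec m" unfolding u_def using I(2) yv by auto
  define s where "s = 2 * Re (\<Sum>i<m. cnj (u $ i) * yv $ i)"
  have eW: "s - Re (qform m W u) = Re (qform m (minv m W) yv)"
    using qform_minv_variational(2)[OF W yv yv] unfolding s_def u_def by simp
  have eA: "s - Re (qform m A u) \<le> Re (qform m (minv m A) yv)"
    using qform_minv_variational(1)[OF A yv u] unfolding s_def by simp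
  have eAD: "s - Re (qform m (A + D) u) \<le> Re (qform m (minv m (A + D)) yv)"
    using qform_minv_variational(1)[OF AD yv u] unfolding s_def by simp
  have qD: "qform m D u = qform m (A + D) u - qform m A u" using qform_add[OF Ac D, of u] by simp
  have qW: "Re (qform m W u) = Re (qform m A u) + l * (Re (qform m (A + D) u) - Re (qform m A u))"
    unfolding W_def qform_add_smult[OF Ac D] qD by simp
  have "s - Re (qform m W u) = (1 - l) * (s - Re (qform m A u)) + l * (s - Re (qform m (A + D) u))"
    unfolding qW by (simp add: algebra_simps)
  also have "\<dots> \<le> (1 - l) * Re (qform m (minv m A) yv) + l * Re (qform m (minv m (A + D)) yv)"
    by (intro add_mono mult_left_mono eA eAD) (use l in auto)
  finally show ?thesis using eW unfolding W_def by simp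
qed

lemma feasible_segment:
  assumes ydim: "\<forall>i<n. y i \<in> carrier_vec m" and A: "A \<in> feasible m n y"
    and AD: "A + D \<in> feasible m n y" and D: "D \<in> carrier_mat m m" and l: "0 \<le> l" "l \<le> 1"
  shows "A + complex_of_real l \<cdot>\<^sub>m D \<in> feasible m n y"
proof -
  have hA: "herm m A" "toeplitz m A" "posdef m A"
    and cA: "(\<Sum>i<n. Re (qform m (minv m A) (y i))) / real n \<le> 1"
    using A unfolding feasible_def by (auto simp: Re_inverse_of_nat_mult Re_sum)
  have hAD: "herm m (A + D)" "toeplitz m (A + D)" "posdef m (A + D)"
    and cAD: "(\<Sum>i<n. Re (qform m (minv m (A + D)) (y i))) / real n \<le> 1"
    using AD unfolding feasible_def by (auto simp: Re_inverse_of_nat_mult Re_sum)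
  let ?W = "A + complex_of_real l \<cdot>\<^sub>m D"
  have "(\<Sum>i<n. Re (qform m (minv m ?W) (y i)))
     \<le> (\<Sum>i<n. (1 - l) * Re (qform m (minv m A) (y i)) + l * Re (qform m (minv m (A + D)) (y i)))"
    by (intro sum_mono qform_minv_segment_convex[OF hA(3) hAD(3) D l]) (use ydim in auto)
  also have "\<dots> = (1 - l) * (\<Sum>i<n. Re (qform m (minv m A) (y i)))
        + l * (\<Sum>i<n. Re (qform m (minv m (A + D)) (y i)))"
    by (simp add: sum.distrib sum_distrib_left)
  finally have "(\<Sum>i<n. Re (qform m (minv m ?W) (y i))) / real n
     \<le> ((1 - l) * (\<Sum>i<n. Re (qform m (minv m A) (y i)))
        + l * (\<Sum>i<n. Re (qform m (minv m (A + D)) (y i)))) / real n"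
    by (rule divide_right_mono) simp
  also have "\<dots> = (1 - l) * ((\<Sum>i<n. Re (qform m (minv m A) (y i))) / real n)
        + l * ((\<Sum>i<n. Re (qform m (minv m (A + D)) (y i))) / real n)"
    by (simp add: add_divide_distrib)
  also have "\<dots> \<le> (1 - l) * 1 + l * 1"
    by (intro add_mono mult_left_mono cA cAD) (use l in auto)
  finally have c: "(\<Sum>i<n. Re (qform m (minv m ?W) (y i))) / real n \<le> 1" by simp
  show ?thesis unfolding feasible_def
    using posdef_segment[OF hA(3) hAD(3) D l] toeplitz_segment[OF hA(2) hAD(2) D] c
    unfolding posdef_def by (auto simp: Re_inverse_of_nat_mult Re_sum)
qed

lemma feasible_posdef: "X \<in> feasible m n y \<Longrightarrow> posdef m X"
  unfolding feasible_def by auto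

lemma feasible_carrier: "X \<in> feasible m n y \<Longrightarrow> X \<in> carrier_mat m m"
  using feasible_posdef posdef_carrier by blast

lemma feasible_herm: "X \<in> feasible m n y \<Longrightarrow> herm m X"
  unfolding feasible_def by auto

definition frob_inner :: "nat \<Rightarrow> complex mat \<Rightarrow> complex mat \<Rightarrow> complex" where
  "frob_inner m A B = (\<Sum>i<m. \<Sum>j<m. cnj (A $$ (i,j)) * B $$ (i,j))"

lemma frob2_nonneg: "0 \<le> frob2 m A"
  unfolding frob2_def by (intro sum_nonneg) auto

lemma cmod_add_squared: "(cmod (a + b))^2 = (cmod a)^2 + 2 * Re (cnj a * b) + (cmod b)^2"
  by (simp add: cmod_power2, simp add: power2_eq_square algebra_simps)

lemma frob2_add:
  assumes "A \<in> carrier_mat m m" "B \<in> carrier_mat m m"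
  shows "frob2 m (A + B) = frob2 m A + 2 * Re (frob_inner m A B) + frob2 m B"
proof -
  have "frob2 m (A + B) = (\<Sum>i<m. \<Sum>j<m. (cmod (A $$ (i,j)))^2
      + 2 * Re (cnj (A $$ (i,j)) * B $$ (i,j)) + (cmod (B $$ (i,j)))^2)"
    unfolding frob2_def using assms by (intro sum.cong refl) (simp add: cmod_add_squared)
  then show ?thesis
    unfolding frob2_def frob_inner_def by (simp add: sum.distrib sum_distrib_left Re_sum)
qed

lemma frob2_smult_of_real:
  assumes "A \<in> carrier_mat m m"
  shows "frob2 m (complex_of_real l \<cdot>\<^sub>m A) = l^2 * frob2 m A"
  unfolding frob2_def using assms by (simp add: norm_mult power_mult_distrib sum_distrib_left)

lemma frob_inner_smult_right:
  assumes "B \<in> carrier_mat m m"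
  shows "frob_inner m A (c \<cdot>\<^sub>m B) = c * frob_inner m A B"
  unfolding frob_inner_def using assms by (simp add: sum_distrib_left algebra_simps)

lemma Re_frob_inner_commute: "Re (frob_inner m A B) = Re (frob_inner m B A)"
  unfolding frob_inner_def Re_sum by (intro sum.cong refl) simp

lemma Re_frob_inner_herm:
  assumes "A \<in> carrier_mat m m" "herm m B"
  shows "Re (frob_inner m A B) = Re (mtrace m (A * B))"
proof -
  have Bc: "B \<in> carrier_mat m m" using assms(2) unfolding herm_def by auto
  have "cnj (B $$ (i,j)) = B $$ (j,i)" if "i < m" "j < m" for i j
    using assms(2) that unfolding herm_def by (metis complex_cnj_cnj)
  then have "frob_inner m A B = cnj (\<Sum>i<m. \<Sum>j<m. A $$ (i,j) * B $$ (j,i))"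
    unfolding frob_inner_def cnj_sum by (intro sum.cong refl) auto
  then show ?thesis unfolding mtrace_mult[OF assms(1) Bc] by simp
qed

lemma nonneg_of_nonneg_at_right:
  fixes a b :: real
  assumes "\<And>l. 0 < l \<Longrightarrow> l \<le> 1 \<Longrightarrow> 0 \<le> a + l * b"
  shows "0 \<le> a"
proof (rule tendsto_lowerbound)
  have "((\<lambda>l. a + l * b) \<longlongrightarrow> a + 0 * b) (at_right 0)"
    by (intro tendsto_intros)
  then show "((\<lambda>l. a + l * b) \<longlongrightarrow> a) (at_right 0)" by simp
  show "\<forall>\<^sub>F l in at_right 0. 0 \<le> a + l * b"
    unfolding eventually_at_right_field by (intro exI[of _ 1]) (auto intro: assms)
qed simp

lemma nearest_point_variational_ineq:
  assumes X: "X \<in> carrier_mat m m" and Y: "Y \<in> carrier_mat m m" and B: "B \<in> carrier_mat m m"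
    and nearest: "\<And>l. 0 < l \<Longrightarrow> l \<le> 1 \<Longrightarrow>
      frob2 m (X - B) \<le> frob2 m (X + complex_of_real l \<cdot>\<^sub>m (Y - X) - B)"
  shows "0 \<le> Re (frob_inner m (X - B) (Y - X))"
proof (rule nonneg_of_nonneg_at_right)
  fix l :: real assume l: "0 < l" "l \<le> 1"
  have YX: "Y - X \<in> carrier_mat m m" using minus_carrier_mat[OF X] .
  have XB: "X - B \<in> carrier_mat m m" using minus_carrier_mat[OF B] .
  have Re_of_real_mult: "Re (complex_of_real l * z) = l * Re z" for z by simp
  have shift: "X + complex_of_real l \<cdot>\<^sub>m (Y - X) - B = (X - B) + complex_of_real l \<cdot>\<^sub>m (Y - X)"
    using X Y B by (intro eq_matI) auto
  have "frob2 m (X + complex_of_real l \<cdot>\<^sub>m (Y - X) - B)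
      = frob2 m (X - B) + l * (2 * Re (frob_inner m (X - B) (Y - X)) + l * frob2 m (Y - X))"
    unfolding shift frob2_add[OF XB smult_carrier_mat[OF YX]] frob2_smult_of_real[OF YX]
      frob_inner_smult_right[OF YX] Re_of_real_mult
    by (simp only: power2_eq_square ring_distribs ac_simps)
  then have "0 \<le> l * (2 * Re (frob_inner m (X - B) (Y - X)) + l * frob2 m (Y - X))"
    using nearest[OF l] by linarith
  then have "0 \<le> 2 * Re (frob_inner m (X - B) (Y - X)) + l * frob2 m (Y - X)"
    using l(1) by (simp add: zero_le_mult_iff)
  then show "0 \<le> Re (frob_inner m (X - B) (Y - X)) + l * (frob2 m (Y - X) / 2)" by simp
qed

section \<open>Entrywise limits of matrices\<close>

definition mat_tendsto :: "nat \<Rightarrow> ('b \<Rightarrow> complex mat) \<Rightarrow> complex mat \<Rightarrow> 'b filter \<Rightarrow> bool" where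
  "mat_tendsto m M N F \<longleftrightarrow> (\<forall>i<m. \<forall>j<m. ((\<lambda>k. M k $$ (i,j)) \<longlongrightarrow> N $$ (i,j)) F)"

lemma mat_tendsto_const: "mat_tendsto m (\<lambda>k. A) A F"
  unfolding mat_tendsto_def by simp

lemma mat_tendsto_diff:
  assumes "\<And>k. B k \<in> carrier_mat m m" "B' \<in> carrier_mat m m"
    and "mat_tendsto m A A' F" "mat_tendsto m B B' F"
  shows "mat_tendsto m (\<lambda>k. A k - B k) (A' - B') F"
  unfolding mat_tendsto_def
proof (intro allI impI)
  fix i j assume "i < m" "j < m"
  then have "(\<lambda>k. (A k - B k) $$ (i,j)) = (\<lambda>k. A k $$ (i,j) - B k $$ (i,j))"
    by (simp add: carrier_matD[OF assms(1)])
  then show "((\<lambda>k. (A k - B k) $$ (i,j)) \<longlongrightarrow> (A' - B') $$ (i,j)) F"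
    using assms(2-4) \<open>i < m\<close> \<open>j < m\<close> by (auto intro!: tendsto_diff simp: mat_tendsto_def)
qed

lemma mat_tendsto_smult:
  assumes "\<And>k. A k \<in> carrier_mat m m" "A' \<in> carrier_mat m m" and "mat_tendsto m A A' F"
  shows "mat_tendsto m (\<lambda>k. c \<cdot>\<^sub>m A k) (c \<cdot>\<^sub>m A') F"
  unfolding mat_tendsto_def
proof (intro allI impI)
  fix i j assume "i < m" "j < m"
  then have "(\<lambda>k. (c \<cdot>\<^sub>m A k) $$ (i,j)) = (\<lambda>k. c * A k $$ (i,j))"
    by (simp add: carrier_matD[OF assms(1)])
  then show "((\<lambda>k. (c \<cdot>\<^sub>m A k) $$ (i,j)) \<longlongrightarrow> (c \<cdot>\<^sub>m A') $$ (i,j)) F"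
    using assms(2,3) \<open>i < m\<close> \<open>j < m\<close> by (auto intro!: tendsto_mult simp: mat_tendsto_def)
qed

lemma det_tendsto:
  assumes M: "\<And>k. M k \<in> carrier_mat n n" and N: "N \<in> carrier_mat n n" and L: "mat_tendsto n M N F"
  shows "((\<lambda>k. det (M k)) \<longlongrightarrow> det N) F"
proof -
  have e: "(\<lambda>k. det (M k)) =
      (\<lambda>k. \<Sum>p\<in>{p. p permutes {0..<n}}. signof p * (\<Prod>i=0..<n. M k $$ (i, p i)))"
    using det_def'[OF M] by auto
  show ?thesis unfolding e det_def'[OF N]
  proof (intro tendsto_sum tendsto_mult tendsto_const tendsto_prod)
    fix p i assume p: "p \<in> {p. p permutes {0..<n}}" and i: "i \<in> {0..<n}"
    then have "p i < n" using permutes_in_image[of p "{0..<n}" i] by auto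
    then show "((\<lambda>k. M k $$ (i, p i)) \<longlongrightarrow> N $$ (i, p i)) F"
      using L i unfolding mat_tendsto_def by auto
  qed
qed

text \<open>Entries of the inverse are cofactors divided by the determinant, so the inverse is
  continuous wherever the determinant does not vanish.\<close>

lemma minv_tendsto:
  assumes M: "\<And>k. M k \<in> carrier_mat m m" and N: "N \<in> carrier_mat m m"
    and L: "mat_tendsto m M N F" and d: "det N \<noteq> 0"
  shows "mat_tendsto m (\<lambda>k. minv m (M k)) (minv m N) F"
  unfolding mat_tendsto_def
proof (intro allI impI)
  fix i j assume ij: "i < m" "j < m"
  have dt: "((\<lambda>k. det (M k)) \<longlongrightarrow> det N) F" by (rule det_tendsto[OF M N L])
  have ev: "eventually (\<lambda>k. det (M k) \<noteq> 0) F" using tendsto_imp_eventually_ne[OF dt d] .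
  have ent: "minv m A $$ (i,j) = (1 / det A) * ((-1)^(j+i) * det (mat_delete A j i))"
    if "A \<in> carrier_mat m m" "det A \<noteq> 0" for A
    using minv_adj_mat(1)[OF that] that ij by (simp add: adj_mat_def cofactor_def)
  have "mat_tendsto (m-1) (\<lambda>k. mat_delete (M k) j i) (mat_delete N j i) F"
    unfolding mat_tendsto_def
  proof (intro allI impI)
    fix a b assume ab: "a < m - 1" "b < m - 1"
    have e1: "mat_delete A j i $$ (a,b) = A $$ (if a < j then a else Suc a, if b < i then b else Suc b)"
      if "A \<in> carrier_mat m m" for A
      using that ab unfolding mat_delete_def by auto
    have lt: "(if a < j then a else Suc a) < m" "(if b < i then b else Suc b) < m" using ab by auto
    show "((\<lambda>k. mat_delete (M k) j i $$ (a, b)) \<longlongrightarrow> mat_delete N j i $$ (a, b)) F"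
      unfolding e1[OF M] e1[OF N] using L lt unfolding mat_tendsto_def by blast
  qed
  from det_tendsto[OF mat_delete_carrier[OF M] mat_delete_carrier[OF N] this]
  have "((\<lambda>k. (1 / det (M k)) * ((-1)^(j+i) * det (mat_delete (M k) j i))) \<longlongrightarrow>
         (1 / det N) * ((-1)^(j+i) * det (mat_delete N j i))) F"
    by (intro tendsto_mult tendsto_divide tendsto_const dt d)
  moreover have "eventually (\<lambda>k. (1 / det (M k)) * ((-1)^(j+i) * det (mat_delete (M k) j i))
        = minv m (M k) $$ (i,j)) F"
    using ev by eventually_elim (simp add: ent[OF M])
  ultimately show "((\<lambda>k. minv m (M k) $$ (i, j)) \<longlongrightarrow> minv m N $$ (i, j)) F"
    unfolding ent[OF N d] by (rule Lim_transform_eventually)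
qed

lemma mtrace_mult_tendsto:
  assumes A: "eventually (\<lambda>k. A k \<in> carrier_mat m m) F" "A' \<in> carrier_mat m m"
    and B: "\<And>k. B k \<in> carrier_mat m m" "B' \<in> carrier_mat m m"
    and LA: "mat_tendsto m A A' F" and LB: "mat_tendsto m B B' F"
  shows "((\<lambda>k. mtrace m (A k * B k)) \<longlongrightarrow> mtrace m (A' * B')) F"
proof -
  have e: "eventually (\<lambda>k. (\<Sum>i<m. \<Sum>j<m. A k $$ (i,j) * B k $$ (j,i)) = mtrace m (A k * B k)) F"
    using A(1) by eventually_elim (use mtrace_mult B(1) in auto)
  have "((\<lambda>k. \<Sum>i<m. \<Sum>j<m. A k $$ (i,j) * B k $$ (j,i)) \<longlongrightarrow> mtrace m (A' * B')) F"
    unfolding mtrace_mult[OF A(2) B(2)]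
    by (intro tendsto_sum tendsto_mult) (use LA LB in \<open>auto simp: mat_tendsto_def\<close>)
  then show ?thesis by (rule Lim_transform_eventually[OF _ e])
qed

lemma frob_inner_tendsto:
  assumes "mat_tendsto m A A' F" "mat_tendsto m B B' F"
  shows "((\<lambda>k. frob_inner m (A k) (B k)) \<longlongrightarrow> frob_inner m A' B') F"
  unfolding frob_inner_def
  by (intro tendsto_sum tendsto_mult tendsto_cnj) (use assms in \<open>auto simp: mat_tendsto_def\<close>)

lemma logdet_tendsto:
  assumes "\<And>k. M k \<in> carrier_mat m m" "posdef m N" "mat_tendsto m M N F"
  shows "((\<lambda>k. logdet (M k)) \<longlongrightarrow> logdet N) F"
  unfolding logdet_def using posdef_det_pos[OF assms(2)]
  by (intro tendsto_ln tendsto_Re det_tendsto[OF assms(1) posdef_carrier[OF assms(2)] assms(3)]) auto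

lemma mat_tendsto_of_frob2_diff:
  assumes "\<And>k. A k \<in> carrier_mat m m" "\<And>k. B k \<in> carrier_mat m m"
    and frob: "((\<lambda>k. frob2 m (A k - B k)) \<longlongrightarrow> 0) F" and B: "mat_tendsto m B N F"
  shows "mat_tendsto m A N F"
  unfolding mat_tendsto_def
proof (intro allI impI)
  fix i j assume ij: "i < m" "j < m"
  have le: "norm (A k $$ (i,j) - B k $$ (i,j)) \<le> sqrt (frob2 m (A k - B k))" for k
  proof (rule real_le_rsqrt)
    have "(cmod ((A k - B k) $$ (i,j)))^2 \<le> (\<Sum>j<m. (cmod ((A k - B k) $$ (i,j)))^2)"
      by (rule member_le_sum) (use ij in auto)
    also have "\<dots> \<le> frob2 m (A k - B k)"
      unfolding frob2_def by (rule member_le_sum[where f = "\<lambda>i. \<Sum>j<m. _ i j"]) (use ij in \<open>auto intro: sum_nonneg\<close>)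
    moreover have "(A k - B k) $$ (i,j) = A k $$ (i,j) - B k $$ (i,j)"
      using ij by (simp add: carrier_matD[OF assms(2)])
    ultimately show "(norm (A k $$ (i,j) - B k $$ (i,j)))^2 \<le> frob2 m (A k - B k)"
      by simp
  qed
  have "((\<lambda>k. sqrt (frob2 m (A k - B k))) \<longlongrightarrow> 0) F"
    using tendsto_real_sqrt[OF frob] by simp
  then have "((\<lambda>k. A k $$ (i,j) - B k $$ (i,j)) \<longlongrightarrow> 0) F"
    by (rule tendsto_0_le[where K = 1]) (use le frob2_nonneg in \<open>auto intro: always_eventually\<close>)
  from tendsto_add[OF this] B ij show "((\<lambda>k. A k $$ (i,j)) \<longlongrightarrow> N $$ (i,j)) F"
    unfolding mat_tendsto_def by fastforce
qed

section \<open>Directional derivative of the log-determinant\<close>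

lemma logdet_difference_quotient_ge:
  assumes Z: "posdef m Z" and ZD: "posdef m (Z + D)" and D: "D \<in> carrier_mat m m"
    and l: "0 < l" "l \<le> 1"
  shows "Re (mtrace m (minv m (Z + complex_of_real l \<cdot>\<^sub>m D) * D))
    \<le> (logdet (Z + complex_of_real l \<cdot>\<^sub>m D) - logdet Z) / l"
proof -
  define W where "W = Z + complex_of_real l \<cdot>\<^sub>m D"
  have Wp: "posdef m W" unfolding W_def using posdef_segment[OF Z ZD D] l by auto
  have Zc: "Z \<in> carrier_mat m m" using Z by (rule posdef_carrier)
  note Wi = posdef_minv(1)[OF Wp]
  have "of_nat m = mtrace m (minv m W * W)" using mtrace_minv_mult_self[OF Wp] ..
  also have "\<dots> = mtrace m (minv m W * Z) + complex_of_real l * mtrace m (minv m W * D)"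
    using mtrace_mult_add_right[OF Wi Zc smult_carrier_mat[OF D]] mtrace_mult_smult_right[OF Wi D]
    unfolding W_def by simp
  finally have "Re (of_nat m) = Re (mtrace m (minv m W * Z) + complex_of_real l * mtrace m (minv m W * D))"
    by (rule arg_cong)
  then have "Re (mtrace m (minv m W * Z)) = real m - l * Re (mtrace m (minv m W * D))"
    by simp
  with logdet_le_mtrace_minv_mult[OF Wp Z]
  have "l * Re (mtrace m (minv m W * D)) \<le> logdet W - logdet Z" by linarith
  then show ?thesis unfolding W_def[symmetric] using l by (simp add: pos_le_divide_eq mult.commute)
qed

text \<open>The previous bound passes to the liminf, its left-hand side being continuous in the step.\<close>

lemma mtrace_minv_mult_le_dir_deriv_logdet:
  assumes Z: "posdef m Z" and ZD: "posdef m (Z + D)" and D: "D \<in> carrier_mat m m"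
  shows "ereal (Re (mtrace m (minv m Z * D))) \<le> dir_deriv logdet Z D"
proof -
  have Zc: "Z \<in> carrier_mat m m" using Z by (rule posdef_carrier)
  define W where "W l = Z + complex_of_real l \<cdot>\<^sub>m D" for l
  have Wc: "W l \<in> carrier_mat m m" for l unfolding W_def using Zc D by simp
  have W_lim: "mat_tendsto m W Z (at_right 0)" unfolding mat_tendsto_def
  proof (intro allI impI)
    fix i j assume ij: "i < m" "j < m"
    have "((\<lambda>l. Z $$ (i,j) + complex_of_real l * D $$ (i,j))
        \<longlongrightarrow> Z $$ (i,j) + complex_of_real 0 * D $$ (i,j)) (at_right 0)"
      by (intro tendsto_intros)
    then show "((\<lambda>l. W l $$ (i, j)) \<longlongrightarrow> Z $$ (i, j)) (at_right 0)"
      unfolding W_def using ij Zc D by simp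
  qed
  have near: "\<forall>\<^sub>F l in at_right 0. 0 < l \<and> l \<le> (1::real)"
    unfolding eventually_at_right_field by (intro exI[of _ 1]) auto
  have "\<forall>\<^sub>F l in at_right 0. minv m (W l) \<in> carrier_mat m m"
    using near by eventually_elim (use posdef_segment[OF Z ZD D] posdef_minv(1) W_def in auto)
  then have "((\<lambda>l. Re (mtrace m (minv m (W l) * D))) \<longlongrightarrow> Re (mtrace m (minv m Z * D))) (at_right 0)"
    by (intro tendsto_Re mtrace_mult_tendsto[OF _ posdef_minv(1)[OF Z] D D
          minv_tendsto[OF Wc Zc W_lim posdef_det_nonzero[OF Z]] mat_tendsto_const])
  then have "ereal (Re (mtrace m (minv m Z * D)))
      = Liminf (at_right 0) (\<lambda>l. ereal (Re (mtrace m (minv m (W l) * D))))"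
    by (intro lim_imp_Liminf[symmetric]) (auto simp: lim_ereal)
  also have "\<dots> \<le> Liminf (at_right 0) (\<lambda>l. ereal ((logdet (W l) - logdet Z) / l))"
    by (intro Liminf_mono)
      (use near in \<open>eventually_elim, use logdet_difference_quotient_ge[OF Z ZD D] W_def in auto\<close>)
  also have "\<dots> = dir_deriv logdet Z D" unfolding dir_deriv_def W_def ..
  finally show ?thesis .
qed

lemma antimono_subseq_gap_tendsto_zero:
  fixes f :: "nat \<Rightarrow> real"
  assumes dec: "\<And>t. f (Suc t) \<le> f t" and r: "strict_mono r" and lim: "(\<lambda>k. f (r k)) \<longlonglongrightarrow> L"
  shows "(\<lambda>k. f (r k) - f (Suc (r k))) \<longlonglongrightarrow> 0"
proof -
  have lower: "L \<le> f t" for t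
  proof (rule LIMSEQ_le_const2[OF lim], intro exI[of _ t] allI impI)
    fix k assume "t \<le> k"
    then have "t \<le> r k" using seq_suble[OF r, of k] by linarith
    then show "f (r k) \<le> f t" by (rule lift_Suc_antimono_le[of f, OF dec])
  qed
  show ?thesis
  proof (rule tendsto_sandwich[of "\<lambda>k. 0" _ sequentially "\<lambda>k. f (r k) - L"])
    show "\<forall>\<^sub>F k in sequentially. 0 \<le> f (r k) - f (Suc (r k))" using dec by simp
    show "\<forall>\<^sub>F k in sequentially. f (r k) - f (Suc (r k)) \<le> f (r k) - L" using lower by simp
    show "(\<lambda>k. f (r k) - L) \<longlonglongrightarrow> 0" using tendsto_diff[OF lim tendsto_const[of L]] by simp
  qed simp
qed

section \<open>The ATOM iterations\<close>

lemma atom_iterates_feasible: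
  assumes "X 0 \<in> feasible m n y"
    and "(\<forall>t. atom1_step m n y (X t) (X (Suc t))) \<or> (\<forall>t. atom2_step m n y (X t) (X (Suc t)))"
  shows "X t \<in> feasible m n y"
proof (cases t)
  case (Suc s)
  then show ?thesis using assms(2) unfolding atom1_step_def atom2_step_def by blast
qed (use assms(1) in simp)

lemma atom1_step_logdet_le_mtrace:
  assumes X0: "X0 \<in> feasible m n y" and step: "atom1_step m n y X0 X1" and Y: "Y \<in> feasible m n y"
  shows "logdet X1 - logdet X0 \<le> Re (mtrace m (minv m X0 * Y)) - real m"
proof -
  have X1: "X1 \<in> feasible m n y" "Re (mtrace m (minv m X0 * X1)) \<le> Re (mtrace m (minv m X0 * Y))"
    using step Y unfolding atom1_step_def by auto
  with logdet_le_mtrace_minv_mult[OF feasible_posdef[OF X0] feasible_posdef[OF X1(1)]]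
  show ?thesis by linarith
qed

lemma atom1_step_logdet_le:
  assumes "X0 \<in> feasible m n y" and "atom1_step m n y X0 X1"
  shows "logdet X1 \<le> logdet X0"
  using atom1_step_logdet_le_mtrace[OF assms assms(1)] mtrace_minv_mult_self[OF feasible_posdef[OF assms(1)]]
  by simp

text \<open>With B = X0 - inv(X0)/2, expanding the square in the optimality of X1 against X0 gives
  Re Tr(inv(X0) X1) - m \<le> -frob2(X1 - X0), and the determinant-trace inequality bounds
  the change of logdet by the left-hand side.\<close>

lemma atom2_step_logdet_le_frob2:
  assumes X0: "X0 \<in> feasible m n y" and step: "atom2_step m n y X0 X1"
  shows "logdet X1 - logdet X0 \<le> - frob2 m (X1 - X0)"
proof -
  have X1: "X1 \<in> feasible m n y" using step unfolding atom2_step_def by auto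
  have c0: "X0 \<in> carrier_mat m m" and c1: "X1 \<in> carrier_mat m m"
    using X0 X1 by (auto intro: feasible_carrier)
  define P where "P = minv m X0"
  define B where "B = X0 - (1/2 :: complex) \<cdot>\<^sub>m P"
  have Pc: "P \<in> carrier_mat m m" unfolding P_def using posdef_minv(1)[OF feasible_posdef[OF X0]] .
  have d: "X1 - X0 \<in> carrier_mat m m" using minus_carrier_mat[OF c0] .
  have "frob2 m (X1 - B) \<le> frob2 m (X0 - B)"
    using step X0 unfolding atom2_step_def Let_def B_def P_def by auto
  moreover have "X1 - B = (X1 - X0) + (1/2 :: complex) \<cdot>\<^sub>m P" "X0 - B = (1/2 :: complex) \<cdot>\<^sub>m P"
    unfolding B_def using c0 c1 Pc by (auto intro!: eq_matI)
  moreover have "Re (frob_inner m (X1 - X0) ((1/2 :: complex) \<cdot>\<^sub>m P)) = Re (frob_inner m P (X1 - X0)) / 2"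
    unfolding frob_inner_smult_right[OF Pc] by (simp add: Re_frob_inner_commute)
  ultimately have near: "frob2 m (X1 - X0) + Re (frob_inner m P (X1 - X0)) \<le> 0"
    using frob2_add[OF d smult_carrier_mat[OF Pc]] by simp
  have "Re (frob_inner m P (X1 - X0)) = Re (mtrace m (P * X1)) - Re (mtrace m (P * X0))"
    using Re_frob_inner_herm[OF Pc herm_diff[OF feasible_herm[OF X1] feasible_herm[OF X0]]]
      mtrace_mult_diff_right[OF Pc c1 c0] by simp
  also have "\<dots> = Re (mtrace m (P * X1)) - real m"
    unfolding P_def mtrace_minv_mult_self[OF feasible_posdef[OF X0]] by simp
  finally show ?thesis
    using near logdet_le_mtrace_minv_mult[OF feasible_posdef[OF X0] feasible_posdef[OF X1]]
    unfolding P_def by linarith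
qed

lemma atom2_step_logdet_le:
  assumes "X0 \<in> feasible m n y" and "atom2_step m n y X0 X1"
  shows "logdet X1 \<le> logdet X0"
  using atom2_step_logdet_le_frob2[OF assms] frob2_nonneg[of m "X1 - X0"] by linarith

lemma atom2_step_variational_ineq:
  assumes ydim: "\<forall>i<n. y i \<in> carrier_vec m" and X0: "X0 \<in> feasible m n y"
    and step: "atom2_step m n y X0 X1" and Y: "Y \<in> feasible m n y"
  shows "0 \<le> Re (frob_inner m (X1 - (X0 - (1/2 :: complex) \<cdot>\<^sub>m minv m X0)) (Y - X1))"
proof (rule nearest_point_variational_ineq)
  have X1: "X1 \<in> feasible m n y" using step unfolding atom2_step_def by auto
  have c0: "X0 \<in> carrier_mat m m" and c1: "X1 \<in> carrier_mat m m" and cY: "Y \<in> carrier_mat m m"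
    using X0 X1 Y by (auto intro: feasible_carrier)
  then show "X1 \<in> carrier_mat m m" "Y \<in> carrier_mat m m" by auto
  show "X0 - (1/2 :: complex) \<cdot>\<^sub>m minv m X0 \<in> carrier_mat m m"
    using c0 posdef_minv(1)[OF feasible_posdef[OF X0]] by (intro minus_carrier_mat) simp
  fix l :: real assume l: "0 < l" "l \<le> 1"
  have "X1 + (Y - X1) = Y" using c1 cY by (intro eq_matI) auto
  then have "X1 + (Y - X1) \<in> feasible m n y" using Y by simp
  from feasible_segment[OF ydim X1 this minus_carrier_mat[OF c1] less_imp_le[OF l(1)] l(2)]
  have "X1 + complex_of_real l \<cdot>\<^sub>m (Y - X1) \<in> feasible m n y" .
  then show "frob2 m (X1 - (X0 - (1/2 :: complex) \<cdot>\<^sub>m minv m X0))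
      \<le> frob2 m (X1 + complex_of_real l \<cdot>\<^sub>m (Y - X1) - (X0 - (1/2 :: complex) \<cdot>\<^sub>m minv m X0))"
    using step unfolding atom2_step_def Let_def by blast
qed

lemma cluster_logdet_gap_tendsto_zero:
  assumes X: "\<And>t. X t \<in> feasible m n y" and dec: "\<And>t. logdet (X (Suc t)) \<le> logdet (X t)"
    and r: "strict_mono r" and Z: "posdef m Z" and lim: "mat_tendsto m (\<lambda>k. X (r k)) Z sequentially"
  shows "(\<lambda>k. logdet (X (r k)) - logdet (X (Suc (r k)))) \<longlonglongrightarrow> 0"
  using antimono_subseq_gap_tendsto_zero[OF dec r logdet_tendsto[OF feasible_carrier[OF X] Z lim]] .

lemma atom1_cluster_mtrace_nonneg:
  assumes X: "\<And>t. X t \<in> feasible m n y" and step: "\<And>t. atom1_step m n y (X t) (X (Suc t))"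
    and r: "strict_mono r" and Z: "posdef m Z" and lim: "mat_tendsto m (\<lambda>k. X (r k)) Z sequentially"
    and D: "D \<in> carrier_mat m m" and ZD: "Z + D \<in> feasible m n y"
  shows "0 \<le> Re (mtrace m (minv m Z * D))"
proof -
  have Zc: "Z \<in> carrier_mat m m" using Z by (rule posdef_carrier)
  have gap: "(\<lambda>k. logdet (X (r k)) - logdet (X (Suc (r k)))) \<longlonglongrightarrow> 0"
    using cluster_logdet_gap_tendsto_zero[OF X _ r Z lim] atom1_step_logdet_le[OF X step] by blast
  have "(\<lambda>k. Re (mtrace m (minv m (X (r k)) * (Z + D))) - real m)
      \<longlonglongrightarrow> Re (mtrace m (minv m Z * (Z + D))) - real m"
    by (intro tendsto_diff tendsto_const tendsto_Re mtrace_mult_tendsto[OF always_eventually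
          posdef_minv(1)[OF Z] _ _ minv_tendsto[OF feasible_carrier[OF X] Zc lim]
          mat_tendsto_const]) (use Zc D feasible_posdef[OF X] posdef_minv(1) posdef_det_nonzero[OF Z]
          in auto)
  moreover have "\<forall>\<^sub>F k in sequentially. - (logdet (X (r k)) - logdet (X (Suc (r k))))
      \<le> Re (mtrace m (minv m (X (r k)) * (Z + D))) - real m"
    using atom1_step_logdet_le_mtrace[OF X step ZD] by (intro always_eventually allI) simp
  ultimately have "- 0 \<le> Re (mtrace m (minv m Z * (Z + D))) - real m"
    by (intro tendsto_le[OF _ _ tendsto_minus[OF gap]]) auto
  then show ?thesis
    unfolding mtrace_mult_add_right[OF posdef_minv(1)[OF Z] Zc D] mtrace_minv_mult_self[OF Z] by simp
qed

lemma atom2_next_iterate_tendsto: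
  assumes X: "\<And>t. X t \<in> feasible m n y" and step: "\<And>t. atom2_step m n y (X t) (X (Suc t))"
    and r: "strict_mono r" and Z: "posdef m Z" and lim: "mat_tendsto m (\<lambda>k. X (r k)) Z sequentially"
  shows "mat_tendsto m (\<lambda>k. X (Suc (r k))) Z sequentially"
proof (rule mat_tendsto_of_frob2_diff[OF feasible_carrier[OF X] feasible_carrier[OF X] _ lim])
  have gap: "(\<lambda>k. logdet (X (r k)) - logdet (X (Suc (r k)))) \<longlonglongrightarrow> 0"
    using cluster_logdet_gap_tendsto_zero[OF X _ r Z lim] atom2_step_logdet_le[OF X step] by blast
  show "(\<lambda>k. frob2 m (X (Suc (r k)) - X (r k))) \<longlonglongrightarrow> 0"
  proof (rule tendsto_sandwich[OF _ _ tendsto_const gap])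
    show "\<forall>\<^sub>F k in sequentially. 0 \<le> frob2 m (X (Suc (r k)) - X (r k))"
      by (simp add: frob2_nonneg)
    show "\<forall>\<^sub>F k in sequentially. frob2 m (X (Suc (r k)) - X (r k))
        \<le> logdet (X (r k)) - logdet (X (Suc (r k)))"
      using atom2_step_logdet_le_frob2[OF X step] by (intro always_eventually allI) (smt (verit))
  qed
qed

lemma Re_frob_inner_half_minv:
  assumes Z: "posdef m Z" and D: "herm m D"
  shows "Re (frob_inner m (Z - (Z - (1/2 :: complex) \<cdot>\<^sub>m minv m Z)) D) = Re (mtrace m (minv m Z * D)) / 2"
proof -
  have Zc: "Z \<in> carrier_mat m m" and Zi: "minv m Z \<in> carrier_mat m m"
    using Z by (auto intro: posdef_carrier posdef_minv)
  have "Z - (Z - (1/2 :: complex) \<cdot>\<^sub>m minv m Z) = (1/2 :: complex) \<cdot>\<^sub>m minv m Z"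
    using Zc Zi by (intro eq_matI) auto
  then have "Re (frob_inner m (Z - (Z - (1/2 :: complex) \<cdot>\<^sub>m minv m Z)) D)
      = Re (frob_inner m D ((1/2 :: complex) \<cdot>\<^sub>m minv m Z))"
    using Re_frob_inner_commute by metis
  also have "\<dots> = Re (frob_inner m D (minv m Z)) / 2"
    unfolding frob_inner_smult_right[OF Zi] by simp
  also have "\<dots> = Re (mtrace m (minv m Z * D)) / 2"
    using Re_frob_inner_commute Re_frob_inner_herm[OF Zi D] by metis
  finally show ?thesis .
qed

lemma atom2_cluster_mtrace_nonneg:
  assumes ydim: "\<forall>i<n. y i \<in> carrier_vec m"
    and X: "\<And>t. X t \<in> feasible m n y" and step: "\<And>t. atom2_step m n y (X t) (X (Suc t))"
    and r: "strict_mono r" and Z: "posdef m Z" and lim: "mat_tendsto m (\<lambda>k. X (r k)) Z sequentially"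
    and D: "D \<in> carrier_mat m m" and ZD: "Z + D \<in> feasible m n y"
  shows "0 \<le> Re (mtrace m (minv m Z * D))"
proof -
  have Zc: "Z \<in> carrier_mat m m" using Z by (rule posdef_carrier)
  have Xc: "X t \<in> carrier_mat m m" "minv m (X t) \<in> carrier_mat m m" for t
    using X by (auto intro: feasible_carrier posdef_minv feasible_posdef)
  have ZDc: "Z + D \<in> carrier_mat m m" using ZD by (rule feasible_carrier)
  have next_lim: "mat_tendsto m (\<lambda>k. X (Suc (r k))) Z sequentially"
    by (rule atom2_next_iterate_tendsto[OF X step r Z lim])
  define B where "B t = X t - (1/2 :: complex) \<cdot>\<^sub>m minv m (X t)" for t
  have Bc: "B t \<in> carrier_mat m m" for t
    unfolding B_def by (intro minus_carrier_mat smult_carrier_mat Xc)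
  have "mat_tendsto m (\<lambda>k. B (r k)) (Z - (1/2 :: complex) \<cdot>\<^sub>m minv m Z) sequentially"
    unfolding B_def using Xc posdef_minv(1)[OF Z]
    by (intro mat_tendsto_diff lim mat_tendsto_smult minv_tendsto[OF Xc(1) Zc lim posdef_det_nonzero[OF Z]])
      auto
  then have "(\<lambda>k. Re (frob_inner m (X (Suc (r k)) - B (r k)) (Z + D - X (Suc (r k)))))
      \<longlonglongrightarrow> Re (frob_inner m (Z - (Z - (1/2 :: complex) \<cdot>\<^sub>m minv m Z)) (Z + D - Z))"
    using Xc Zc ZDc minus_carrier_mat[OF smult_carrier_mat[OF posdef_minv(1)[OF Z]], of Z "1/2"]
    by (intro tendsto_Re frob_inner_tendsto mat_tendsto_diff[OF Bc _ next_lim]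
        mat_tendsto_diff[OF Xc(1) Zc mat_tendsto_const next_lim]) auto
  then have "0 \<le> Re (frob_inner m (Z - (Z - (1/2 :: complex) \<cdot>\<^sub>m minv m Z)) (Z + D - Z))"
    using atom2_step_variational_ineq[OF ydim X step ZD] unfolding B_def
    by (intro tendsto_lowerbound) auto
  moreover have "Z + D - Z = D" using Zc D by (intro eq_matI) auto
  moreover have "herm m D"
    using herm_of_herm_add[OF _ feasible_herm[OF ZD] D] Z unfolding posdef_def by blast
  ultimately show ?thesis using Re_frob_inner_half_minv[OF Z] by simp
qed

theorem lemma3:
  fixes m n :: nat and y :: "nat \<Rightarrow> complex vec" and X :: "nat \<Rightarrow> complex mat"
  assumes ydim: "\<forall>i<n. y i \<in> carrier_vec m"
    and ynz: "\<exists>i<n. y i \<noteq> 0\<^sub>v m"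
    and X0: "X 0 \<in> feasible m n y"
    and iter: "(\<forall>t. atom1_step m n y (X t) (X (Suc t))) \<or> (\<forall>t. atom2_step m n y (X t) (X (Suc t)))"
  shows "(\<forall>t. logdet (X (Suc t)) \<le> logdet (X t)) \<and>
         (\<forall>Z r. Z \<in> carrier_mat m m \<longrightarrow> posdef m Z \<longrightarrow> strict_mono r \<longrightarrow>
            (\<forall>i<m. \<forall>j<m. (\<lambda>k. X (r k) $$ (i,j)) \<longlonglongrightarrow> Z $$ (i,j)) \<longrightarrow>
            (\<forall>D \<in> carrier_mat m m. Z + D \<in> feasible m n y \<longrightarrow> dir_deriv logdet Z D \<ge> 0))"
proof -
  have feas: "X t \<in> feasible m n y" for t using atom_iterates_feasible[OF X0 iter] .
  have dec: "logdet (X (Suc t)) \<le> logdet (X t)" for t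
    using iter atom1_step_logdet_le[OF feas] atom2_step_logdet_le[OF feas] by blast
  have "dir_deriv logdet Z D \<ge> 0"
    if Z: "posdef m Z" and r: "strict_mono r" and lim: "mat_tendsto m (\<lambda>k. X (r k)) Z sequentially"
      and D: "D \<in> carrier_mat m m" and ZD: "Z + D \<in> feasible m n y" for Z r D
  proof -
    have "0 \<le> Re (mtrace m (minv m Z * D))"
      using iter atom1_cluster_mtrace_nonneg[OF feas _ r Z lim D ZD]
        atom2_cluster_mtrace_nonneg[OF ydim feas _ r Z lim D ZD] by blast
    then have "(0 :: ereal) \<le> ereal (Re (mtrace m (minv m Z * D)))" by simp
    also have "\<dots> \<le> dir_deriv logdet Z D"
      by (rule mtrace_minv_mult_le_dir_deriv_logdet[OF Z feasible_posdef[OF ZD] D])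
    finally show ?thesis .
  qed
  then show ?thesis using dec unfolding mat_tendsto_def by blast
qed

end
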